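(* Let $\mathbf{r}_1,\ldots,\mathbf{r}_m$ be duplicate-free temporal-probabilistic (TP) relations and let $Q$ be a non-repeating TP set query over them, i.e., an expression generated by the grammar $Q ::= \mathbf{r}_i \mid Q \cup^{Tp} Q \mid Q \cap^{Tp} Q \mid Q -^{Tp} Q \mid (Q)$ in which every input relation $\mathbf{r}_i$ occurs at most once. Then the lineage expression of every result tuple of $Q$ is in one-occurrence form (1OF), i.e., no tuple identifier occurs more than once in it.
   Context: A TP relation $\mathbf{r}$ with schema $(F,\lambda,T,p)$ is a finite set of tuples $r$, where $r.F=(A_1,\dots,A_m)$ is a tuple of ordinary attribute values (the "fact"), $r.\lambda$ is a lineage expression, $r.T=[T_s,T_e)$ is an interval over a finite ordered domain $\Omega^T$ of time points, and $r.p\in(0,1]$ is a probability. A lineage expression is a Boolean formula built from tuple identifiers with $\neg,\land,\lor$; for a base tuple $r$, $r.\lambda$ is the atomic formula consisting of its own identifier $r$ (identifiers are distinct across all base tuples). $\mathbf{r}$ is duplicate-free iff for all $r\neq r'$ in $\mathbf{r}$, $r.F\neq r'.F$ or $r.T\cap r'.T=\emptyset$. For a relation $\mathbf{r}$, fact $f$ and time point $t$, $\lambda^{\mathbf{r},f}_t$ denotes $r.\lambda$ if there is $r\in\mathbf{r}$ with $r.F=f$ and $t\in r.T$, and $\mathtt{null}$ otherwise. Lineage-concatenation functions: $\mathbf{and}(\lambda_1,\lambda_2)=(\lambda_1)\land(\lambda_2)$; $\mathbf{andNot}(\lambda_1,\lambda_2)=(\lambda_1)$ if $\lambda_2=\mathtt{null}$,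 else $(\lambda_1)\land\neg(\lambda_2)$; $\mathbf{or}(\lambda_1,\lambda_2)=(\lambda_1)$ if $\lambda_2=\mathtt{null}$, $(\lambda_2)$ if $\lambda_1=\mathtt{null}$, else $(\lambda_1)\lor(\lambda_2)$. TP set operations on relations $\mathbf{r},\mathbf{s}$ with the same schema (a result tuple $\tilde r$ has fact, lineage and interval; its probability is the probability of its lineage): $\tilde r\in\mathbf{r}\cup^{Tp}\mathbf{s}$ iff for all $t\in\tilde r.T$: ($\lambda^{\mathbf{r},\tilde r.F}_t\neq\mathtt{null}$ or $\lambda^{\mathbf{s},\tilde r.F}_t\neq\mathtt{null}$) and $\tilde r.\lambda\equiv\mathbf{or}(\lambda^{\mathbf{r},\tilde r.F}_t,\lambda^{\mathbf{s},\tilde r.F}_t)$; and for all $t'\notin\tilde r.T$: $\tilde r.\lambda\not\equiv\mathbf{or}(\lambda^{\mathbf{r},\tilde r.F}_{t'},\lambda^{\mathbf{s},\tilde r.F}_{t'})$. $\tilde r\in\mathbf{r}\cap^{Tp}\mathbf{s}$ iff for all $t\in\tilde r.T$: $\lambda^{\mathbf{r},\tilde r.F}_t\neq\mathtt{null}$, $\lambda^{\mathbf{s},\tilde r.F}_t\neq\mathtt{null}$ and $\tilde r.\lambda\equiv\mathbf{and}(\lambda^{\mathbf{r},\tilde r.F}_t,\lambda^{\mathbf{s},\tilde r.F}_t)$; and for all $t'\notin\tilde r.T$: $\tilde r.\lambda\not\equiv\mathbf{and}(\lambda^{\mathbf{r},\tilde r.F}_{t'},\lambda^{\mathbf{s},\tilde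 r.F}_{t'})$. $\tilde r\in\mathbf{r}-^{Tp}\mathbf{s}$ iff for all $t\in\tilde r.T$: $\lambda^{\mathbf{r},\tilde r.F}_t\neq\mathtt{null}$ and $\tilde r.\lambda\equiv\mathbf{andNot}(\lambda^{\mathbf{r},\tilde r.F}_t,\lambda^{\mathbf{s},\tilde r.F}_t)$; and for all $t'\notin\tilde r.T$: $\tilde r.\lambda\not\equiv\mathbf{andNot}(\lambda^{\mathbf{r},\tilde r.F}_{t'},\lambda^{\mathbf{s},\tilde r.F}_{t'})$. The result lineages are the formulas produced by the concatenation functions when applying the operations bottom-up in $Q$. *)

theory Defs
  imports Complex_Main
begin

text \<open>Lineage expressions: Boolean formulas over tuple identifiers.\<close>
datatype 'i lin = Var 'i | Neg "'i lin" | Conj "'i lin" "'i lin" | Disj "'i lin" "'i lin"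

fun occs :: "'i lin \<Rightarrow> 'i list" where
  "occs (Var x) = [x]"
| "occs (Neg a) = occs a"
| "occs (Conj a b) = occs a @ occs b"
| "occs (Disj a b) = occs a @ occs b"

definition one_occurrence_form :: "'i lin \<Rightarrow> bool" where
  "one_occurrence_form l \<longleftrightarrow> distinct (occs l)"

text \<open>Time points are natural numbers; an interval [Ts,Te) is a pair (Ts,Te).\<close>
definition ivl :: "nat \<times> nat \<Rightarrow> nat set" where
  "ivl T = {fst T..<snd T}"

text \<open>Base TP tuple: (identifier, fact, interval, probability); its lineage is Var identifier.\<close>
type_synonym ('i,'f) base_tuple = "'i \<times> 'f \<times> (nat \<times> nat) \<times> real"
text \<open>Tuple with lineage (fact, lineage, interval); probability is a function of the lineage.\<close>
type_synonym ('i,'f) ltuple = "'f \<times> 'i lin \<times> (nat \<times> nat)"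

definition b_id :: "('i,'f) base_tuple \<Rightarrow> 'i" where "b_id x = fst x"
definition b_fact :: "('i,'f) base_tuple \<Rightarrow> 'f" where "b_fact x = fst (snd x)"
definition b_T :: "('i,'f) base_tuple \<Rightarrow> nat \<times> nat" where "b_T x = fst (snd (snd x))"
definition b_p :: "('i,'f) base_tuple \<Rightarrow> real" where "b_p x = snd (snd (snd x))"

definition wf_base_rel :: "('i,'f) base_tuple set \<Rightarrow> bool" where
  "wf_base_rel r \<longleftrightarrow> finite r \<and>
     (\<forall>x\<in>r. fst (b_T x) < snd (b_T x) \<and> 0 < b_p x \<and> b_p x \<le> 1)"

definition duplicate_free :: "('i,'f) base_tuple set \<Rightarrow> bool" where
  "duplicate_free r \<longleftrightarrow>
     (\<forall>x\<in>r. \<forall>y\<in>r. x \<noteq> y \<longrightarrow> b_fact x \<noteq> b_fact y \<or> ivl (b_T x) \<inter> ivl (b_T y) = {})"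

text \<open>Lineage of a relation at fact f and time t (None = null).\<close>
definition lam :: "('i,'f) ltuple set \<Rightarrow> 'f \<Rightarrow> nat \<Rightarrow> 'i lin option" where
  "lam r f t = (if \<exists>x\<in>r. fst x = f \<and> t \<in> ivl (snd (snd x))
               then Some (fst (snd (SOME x. x \<in> r \<and> fst x = f \<and> t \<in> ivl (snd (snd x)))))
               else None)"

fun l_and :: "'i lin option \<Rightarrow> 'i lin option \<Rightarrow> 'i lin option" where
  "l_and (Some a) (Some b) = Some (Conj a b)"
| "l_and _ _ = None"

fun l_andNot :: "'i lin option \<Rightarrow> 'i lin option \<Rightarrow> 'i lin option" where
  "l_andNot (Some a) None = Some a"
| "l_andNot (Some a) (Some b) = Some (Conj a (Neg b))"
| "l_andNot None _ = None"

fun l_or :: "'i lin option \<Rightarrow> 'i lin option \<Rightarrow> 'i lin option" where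
  "l_or (Some a) None = Some a"
| "l_or None (Some b) = Some b"
| "l_or (Some a) (Some b) = Some (Disj a b)"
| "l_or None None = None"

text \<open>Generic TP set operation, parametrised by the non-null requirement and concatenation.\<close>
definition tp_op ::
  "('i lin option \<Rightarrow> 'i lin option \<Rightarrow> bool) \<Rightarrow>
   ('i lin option \<Rightarrow> 'i lin option \<Rightarrow> 'i lin option) \<Rightarrow>
   ('i,'f) ltuple set \<Rightarrow> ('i,'f) ltuple set \<Rightarrow> ('i,'f) ltuple set" where
  "tp_op nn conc r s = {(f, l, T). fst T < snd T \<and>
      (\<forall>t\<in>ivl T. nn (lam r f t) (lam s f t) \<and> Some l = conc (lam r f t) (lam s f t)) \<and>
      (\<forall>t'. t' \<notin> ivl T \<longrightarrow> Some l \<noteq> conc (lam r f t') (lam s f t'))}"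

definition tp_union where
  "tp_union = tp_op (\<lambda>a b. a \<noteq> None \<or> b \<noteq> None) l_or"
definition tp_inter where
  "tp_inter = tp_op (\<lambda>a b. a \<noteq> None \<and> b \<noteq> None) l_and"
definition tp_diff where
  "tp_diff = tp_op (\<lambda>a b. a \<noteq> None) l_andNot"

datatype query = Rel nat | QUnion query query | QInter query query | QDiff query query

fun rels :: "query \<Rightarrow> nat list" where
  "rels (Rel i) = [i]"
| "rels (QUnion a b) = rels a @ rels b"
| "rels (QInter a b) = rels a @ rels b"
| "rels (QDiff a b) = rels a @ rels b"

definition non_repeating :: "query \<Rightarrow> bool" where
  "non_repeating Q \<longleftrightarrow> distinct (rels Q)"

definition base_lin :: "('i,'f) base_tuple set \<Rightarrow> ('i,'f) ltuple set" where
  "base_lin r = {(b_fact x, Var (b_id x), b_T x) | x. x \<in> r}"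

fun eval :: "(nat \<Rightarrow> ('i,'f) base_tuple set) \<Rightarrow> query \<Rightarrow> ('i,'f) ltuple set" where
  "eval R (Rel i) = base_lin (R i)"
| "eval R (QUnion a b) = tp_union (eval R a) (eval R b)"
| "eval R (QInter a b) = tp_inter (eval R a) (eval R b)"
| "eval R (QDiff a b) = tp_diff (eval R a) (eval R b)"

end

theory Submission
  imports Defs "HOL-Library.Disjoint_Sets"
begin

(* At every time point the lineage of a result tuple is either the lineage of one operand or a
   conjunction/disjunction built from one lineage of each operand, so its identifier occurrences
   are those of one operand lineage or the concatenation of two.  By induction on the query, all
   identifiers in lineages of a subquery come from the base relations it mentions; for a
   non-repeating query the two operands of each operator mention disjoint sets of relations, hence
   carry disjoint identifiers, and concatenation preserves distinctness. *)

lemma lam_eq_SomeD: "lam r f t = Some l \<Longrightarrow> \<exists>x\<in>r. fst (snd x) = l"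
  unfolding lam_def by (auto split: if_splits intro: someI2_ex)

lemma tp_op_lineage_at_time:
  assumes "x \<in> tp_op nn conc r s"
  obtains t where "conc (lam r (fst x) t) (lam s (fst x) t) = Some (fst (snd x))"
proof -
  obtain f l T where x: "x = (f, l, T)" by (cases x)
  with assms have "fst T \<in> ivl T" "\<forall>t\<in>ivl T. Some l = conc (lam r f t) (lam s f t)"
    unfolding tp_op_def ivl_def by auto
  then show thesis using that x by fastforce
qed

definition one_occurrence_within :: "'i set \<Rightarrow> 'i lin \<Rightarrow> bool" where
  "one_occurrence_within A l \<longleftrightarrow> distinct (occs l) \<and> set (occs l) \<subseteq> A"

definition lineages_within :: "'i set \<Rightarrow> ('i,'f) ltuple set \<Rightarrow> bool" where
  "lineages_within A S \<longleftrightarrow> (\<forall>x\<in>S. one_occurrence_within A (fst (snd x)))"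

lemma lineages_within_lam:
  "lineages_within A S \<Longrightarrow> pred_option (one_occurrence_within A) (lam S f t)"
  by (cases "lam S f t") (auto simp: lineages_within_def dest: lam_eq_SomeD)

definition concatenates_occs :: "('i lin option \<Rightarrow> 'i lin option \<Rightarrow> 'i lin option) \<Rightarrow> bool" where
  "concatenates_occs conc \<longleftrightarrow> (\<forall>a b l. conc a b = Some l \<longrightarrow>
     a = Some l \<or> b = Some l \<or> (\<exists>x y. a = Some x \<and> b = Some y \<and> occs l = occs x @ occs y))"

lemma concatenates_occs_l_or: "concatenates_occs l_or"
  unfolding concatenates_occs_def by (intro allI, case_tac a; case_tac b) auto

lemma concatenates_occs_l_and: "concatenates_occs l_and"
  unfolding concatenates_occs_def by (intro allI, case_tac a; case_tac b) auto

lemma concatenates_occs_l_andNot: "concatenates_occs l_andNot"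
  unfolding concatenates_occs_def by (intro allI, case_tac a; case_tac b) auto

lemma one_occurrence_within_mono:
  "A \<subseteq> B \<Longrightarrow> one_occurrence_within A l \<Longrightarrow> one_occurrence_within B l"
  unfolding one_occurrence_within_def by blast

lemma one_occurrence_within_append:
  assumes "one_occurrence_within A x" "one_occurrence_within B y" "A \<inter> B = {}"
    and "occs l = occs x @ occs y"
  shows "one_occurrence_within (A \<union> B) l"
  using assms unfolding one_occurrence_within_def by auto

lemma concatenates_occs_one_occurrence_within:
  assumes "concatenates_occs conc" "conc a b = Some l" "A \<inter> B = {}"
    and A: "pred_option (one_occurrence_within A) a"
    and B: "pred_option (one_occurrence_within B) b"
  shows "one_occurrence_within (A \<union> B) l"
proof -
  from assms(1,2) consider "a = Some l" | "b = Some l"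
    | x y where "a = Some x" "b = Some y" "occs l = occs x @ occs y"
    unfolding concatenates_occs_def by blast
  then show ?thesis
  proof cases
    case 1
    with A show ?thesis by (simp add: one_occurrence_within_mono[of A "A \<union> B"])
  next
    case 2
    with B show ?thesis by (simp add: one_occurrence_within_mono[of B "A \<union> B"])
  next
    case 3
    with A B \<open>A \<inter> B = {}\<close> show ?thesis by (simp add: one_occurrence_within_append)
  qed
qed

lemma lineages_within_tp_op:
  assumes "concatenates_occs conc" "A \<inter> B = {}"
    and "lineages_within A r" "lineages_within B s"
  shows "lineages_within (A \<union> B) (tp_op nn conc r s)"
  unfolding lineages_within_def
proof
  fix x assume "x \<in> tp_op nn conc r s"
  then obtain t where "conc (lam r (fst x) t) (lam s (fst x) t) = Some (fst (snd x))"
    by (rule tp_op_lineage_at_time)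
  from concatenates_occs_one_occurrence_within[OF assms(1) this assms(2)
      lineages_within_lam[OF assms(3)] lineages_within_lam[OF assms(4)]]
  show "one_occurrence_within (A \<union> B) (fst (snd x))" .
qed

definition query_ids :: "(nat \<Rightarrow> ('i,'f) base_tuple set) \<Rightarrow> query \<Rightarrow> 'i set" where
  "query_ids R Q = (\<Union>i\<in>set (rels Q). b_id ` R i)"

lemma query_ids_disjoint:
  assumes "disjoint_family_on (\<lambda>i. b_id ` R i) I" "set (rels Q1) \<subseteq> I" "set (rels Q2) \<subseteq> I"
    and "set (rels Q1) \<inter> set (rels Q2) = {}"
  shows "query_ids R Q1 \<inter> query_ids R Q2 = {}"
proof -
  have "b_id ` R i \<inter> b_id ` R j = {}" if "i \<in> set (rels Q1)" "j \<in> set (rels Q2)" for i j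
    using that assms by (intro disjoint_family_onD[OF assms(1)]) auto
  then show ?thesis
    unfolding query_ids_def by blast
qed

lemma lineages_within_eval:
  assumes disjoint: "disjoint_family_on (\<lambda>i. b_id ` R i) I"
  shows "set (rels Q) \<subseteq> I \<Longrightarrow> distinct (rels Q) \<Longrightarrow> lineages_within (query_ids R Q) (eval R Q)"
proof (induction Q)
  case (Rel i)
  then show ?case
    by (auto simp: lineages_within_def one_occurrence_within_def base_lin_def query_ids_def)
next
  case (QUnion Q1 Q2)
  then have "query_ids R Q1 \<inter> query_ids R Q2 = {}"
    by (intro query_ids_disjoint[OF disjoint]) auto
  moreover have "query_ids R (QUnion Q1 Q2) = query_ids R Q1 \<union> query_ids R Q2"
    by (simp add: query_ids_def)
  ultimately show ?case
    using QUnion by (simp add: tp_union_def lineages_within_tp_op concatenates_occs_l_or)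
next
  case (QInter Q1 Q2)
  then have "query_ids R Q1 \<inter> query_ids R Q2 = {}"
    by (intro query_ids_disjoint[OF disjoint]) auto
  moreover have "query_ids R (QInter Q1 Q2) = query_ids R Q1 \<union> query_ids R Q2"
    by (simp add: query_ids_def)
  ultimately show ?case
    using QInter by (simp add: tp_inter_def lineages_within_tp_op concatenates_occs_l_and)
next
  case (QDiff Q1 Q2)
  then have "query_ids R Q1 \<inter> query_ids R Q2 = {}"
    by (intro query_ids_disjoint[OF disjoint]) auto
  moreover have "query_ids R (QDiff Q1 Q2) = query_ids R Q1 \<union> query_ids R Q2"
    by (simp add: query_ids_def)
  ultimately show ?case
    using QDiff by (simp add: tp_diff_def lineages_within_tp_op concatenates_occs_l_andNot)
qed

theorem theorem1:
  fixes R :: "nat \<Rightarrow> ('i,'f) base_tuple set" and m :: nat and Q :: query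
  assumes wf: "\<And>i. i \<in> {1..m} \<Longrightarrow> wf_base_rel (R i)"
    and dupfree: "\<And>i. i \<in> {1..m} \<Longrightarrow> duplicate_free (R i)"
    and ids: "\<And>i j x y. i \<in> {1..m} \<Longrightarrow> j \<in> {1..m} \<Longrightarrow> x \<in> R i \<Longrightarrow> y \<in> R j \<Longrightarrow>
               b_id x = b_id y \<Longrightarrow> i = j \<and> x = y"
    and inQ: "set (rels Q) \<subseteq> {1..m}"
    and nonrep: "non_repeating Q"
    and res: "x \<in> eval R Q"
  shows "one_occurrence_form (fst (snd x))"
proof -
  have "disjoint_family_on (\<lambda>i. b_id ` R i) {1..m}"
    using ids unfolding disjoint_family_on_def by blast
  then have "lineages_within (query_ids R Q) (eval R Q)"
    using inQ nonrep by (simp add: lineages_within_eval non_repeating_def)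
  with res show ?thesis
    by (simp add: lineages_within_def one_occurrence_within_def one_occurrence_form_def)
qed

end
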